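(* Let $f,h:\mathbb{R}^d\to\mathbb{R}$ be Lipschitz with constants $L_f,L_h$, let $a,b,\eta>0$, $\widetilde Q=\{(x,s,t):h(x)\le as,\ f(x)+as\le bt\}\subset\mathbb{R}^{d+2}$ and $Z_{\widetilde Q}=\int_{\widetilde Q}e^{-bt}\,dp$. Then for every $\tau\ge0$, $$\int_{\mathbb{R}^{d+2}}e^{-bq_{d+2}}\exp\Big(-\frac{(\mathrm{dist}(q,\widetilde Q)-\tau)^2}{2\eta}\Big)dq\le Z_{\widetilde Q}e^{\tau\widetilde C_L}\Big[\widetilde C_L\sqrt{2\pi\eta}\exp\Big(\frac{\eta\widetilde C_L^2}2\Big)+1\Big],$$ where $q_{d+2}$ is the last coordinate of $q$ and $\widetilde C_L=\sqrt{b^2+a^2+L_f^2}+\sqrt{a^2+L_h^2}$. *)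

theory Defs
  imports "HOL-Analysis.Analysis"
begin

end

theory Submission
  imports Defs "HOL-Probability.Probability" "HOL-Real_Asymp.Real_Asymp"
begin

text \<open>
  Let \<open>W\<close> be Lebesgue measure with density \<open>exp (- b * t)\<close> and \<open>d q = infdist q Q\<close>.
  The Gaussian penalty is at most \<open>exp (- m\<^sup>2 / (2 * \<eta>))\<close> with \<open>m = max 0 (d q - \<tau>)\<close>, which is the
  tail beyond \<open>m\<close> of the Rayleigh density \<open>k u = u / \<eta> * exp (- u\<^sup>2 / (2 * \<eta>))\<close>; by Fubini the
  left-hand side is therefore at most the integral of \<open>k u * W {d \<le> \<tau> + u}\<close> over \<open>u \<ge> 0\<close>.
  The two constraints defining \<open>Q\<close> are Lipschitz in \<open>(x, s, t)\<close> with constants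
  \<open>sqrt (a\<^sup>2 + Lh\<^sup>2)\<close> and \<open>sqrt (b\<^sup>2 + a\<^sup>2 + Lf\<^sup>2)\<close>, so at a point with \<open>d \<le> r\<close> they are violated by
  at most these multiples of \<open>r\<close>, and the translation by \<open>(0, sqrt (a\<^sup>2 + Lh\<^sup>2) * r / a, C * r / b)\<close>
  moves the point into \<open>Q\<close>. Translation in \<open>t\<close> only rescales \<open>W\<close>, whence \<open>W {d \<le> r} \<le> exp (C * r) * W Q\<close>.
  What remains is the exponential moment of \<open>k\<close>, which integration by parts turns into a
  Gaussian integral.
\<close>

definition rayleigh_density :: "real \<Rightarrow> real \<Rightarrow> real" where
  "rayleigh_density \<eta> u = u / \<eta> * exp (- u\<^sup>2 / (2 * \<eta>))"

lemma rayleigh_density_nonneg: "\<eta> > 0 \<Longrightarrow> u \<ge> 0 \<Longrightarrow> rayleigh_density \<eta> u \<ge> 0"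
  by (simp add: rayleigh_density_def)

lemma borel_measurable_rayleigh_density [measurable]: "rayleigh_density \<eta> \<in> borel_measurable borel"
  unfolding rayleigh_density_def by measurable

lemma nn_integral_rayleigh_tail:
  assumes "\<eta> > 0" "v \<ge> 0"
  shows "(\<integral>\<^sup>+u. ennreal (rayleigh_density \<eta> u) * indicator {v..} u \<partial>lborel) = exp (- v\<^sup>2 / (2 * \<eta>))"
proof -
  have "(\<integral>\<^sup>+u. ennreal (rayleigh_density \<eta> u) * indicator {v..} u \<partial>lborel)
      = ennreal (0 - (- exp (- v\<^sup>2 / (2 * \<eta>))))"
  proof (rule nn_integral_FTC_atLeast)
    show "((\<lambda>u. - exp (- u\<^sup>2 / (2 * \<eta>))) \<longlongrightarrow> 0) at_top"
      using \<open>\<eta> > 0\<close> by real_asymp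
    show "((\<lambda>u. - exp (- u\<^sup>2 / (2 * \<eta>))) has_real_derivative rayleigh_density \<eta> u) (at u)" for u
      using \<open>\<eta> > 0\<close> by (auto intro!: derivative_eq_intros simp: rayleigh_density_def field_simps)
  qed (use assms in \<open>auto intro: rayleigh_density_nonneg\<close>)
  then show ?thesis by simp
qed

lemma nn_integral_exp_times_gaussian:
  assumes "\<eta> > 0"
  shows "(\<integral>\<^sup>+v. ennreal (exp (C * v) * exp (- v\<^sup>2 / (2 * \<eta>))) \<partial>lborel)
       = sqrt (2 * pi * \<eta>) * exp (\<eta> * C\<^sup>2 / 2)"
proof -
  have "exp (C * v) * exp (- v\<^sup>2 / (2 * \<eta>))
      = sqrt (2 * pi * \<eta>) * exp (\<eta> * C\<^sup>2 / 2) * normal_density (\<eta> * C) (sqrt \<eta>) v" for v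
    using assms by (simp add: normal_density_def mult_exp_exp field_simps power2_eq_square real_sqrt_mult)
  moreover have "(\<integral>\<^sup>+v. ennreal (normal_density (\<eta> * C) (sqrt \<eta>) v) \<partial>lborel) = 1"
    using assms by (subst nn_integral_eq_integral) (auto intro!: integrable_normal_density integral_normal_density)
  ultimately show ?thesis
    using assms by (simp add: ennreal_mult nn_integral_cmult)
qed

lemma exp_eq_one_plus_nn_integral:
  assumes "C \<ge> 0" "u \<ge> 0"
  shows "ennreal (exp (C * u)) = 1 + (\<integral>\<^sup>+v. ennreal (C * exp (C * v)) * indicator {0..u} v \<partial>lborel)"
proof -
  have "(\<integral>\<^sup>+v. ennreal (C * exp (C * v)) * indicator {0..u} v \<partial>lborel) = ennreal (exp (C * u) - exp (C * 0))"
    by (rule nn_integral_FTC_Icc) (use assms in \<open>auto intro!: derivative_eq_intros\<close>)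
  moreover have "ennreal (exp (C * u)) = ennreal 1 + ennreal (exp (C * u) - 1)"
    using assms by (subst ennreal_plus[symmetric]) auto
  ultimately show ?thesis by simp
qed

lemma nn_integral_rayleigh_exp_le:
  assumes "\<eta> > 0" "C \<ge> 0"
  shows "(\<integral>\<^sup>+u. ennreal (rayleigh_density \<eta> u * exp (C * u)) * indicator {0..} u \<partial>lborel)
       \<le> 1 + C * sqrt (2 * pi * \<eta>) * exp (\<eta> * C\<^sup>2 / 2)"
proof -
  let ?k = "\<lambda>u. ennreal (rayleigh_density \<eta> u) * indicator {0..} u"
  let ?F = "\<lambda>u v. ?k u * (ennreal (C * exp (C * v)) * indicator {0..u} v)"
  have [measurable]: "Measurable.pred (borel \<Otimes>\<^sub>M borel) (\<lambda>(v, u). v \<in> {0..u::real})"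
    unfolding atLeastAtMost_iff by measurable
  have "(\<integral>\<^sup>+u. ennreal (rayleigh_density \<eta> u * exp (C * u)) * indicator {0..} u \<partial>lborel)
      = (\<integral>\<^sup>+u. ?k u + (\<integral>\<^sup>+v. ?F u v \<partial>lborel) \<partial>lborel)"
  proof (rule nn_integral_cong)
    fix u :: real
    show "ennreal (rayleigh_density \<eta> u * exp (C * u)) * indicator {0..} u = ?k u + (\<integral>\<^sup>+v. ?F u v \<partial>lborel)"
      using assms rayleigh_density_nonneg[OF assms(1), of u]
      by (cases "u \<ge> 0") (simp_all add: ennreal_mult exp_eq_one_plus_nn_integral nn_integral_cmult distrib_left)
  qed
  also have "\<dots> = (\<integral>\<^sup>+u. ?k u \<partial>lborel) + (\<integral>\<^sup>+v. \<integral>\<^sup>+u. ?F u v \<partial>lborel \<partial>lborel)"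
    by (subst lborel_pair.Fubini') (simp_all add: nn_integral_add case_prod_beta)
  also have "(\<integral>\<^sup>+u. ?k u \<partial>lborel) = 1"
    using nn_integral_rayleigh_tail[OF assms(1), of 0] by simp
  also have "(\<integral>\<^sup>+v. \<integral>\<^sup>+u. ?F u v \<partial>lborel \<partial>lborel)
      = (\<integral>\<^sup>+v. ennreal (C * exp (C * v)) * indicator {0..} v * exp (- v\<^sup>2 / (2 * \<eta>)) \<partial>lborel)"
  proof (rule nn_integral_cong)
    fix v :: real
    have "(\<integral>\<^sup>+u. ?F u v \<partial>lborel)
        = ennreal (C * exp (C * v)) * indicator {0..} v * (\<integral>\<^sup>+u. ennreal (rayleigh_density \<eta> u) * indicator {v..} u \<partial>lborel)"
      by (subst nn_integral_cmult[symmetric]) (auto intro!: nn_integral_cong simp: mult.commute split: split_indicator)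
    then show "(\<integral>\<^sup>+u. ?F u v \<partial>lborel) = ennreal (C * exp (C * v)) * indicator {0..} v * exp (- v\<^sup>2 / (2 * \<eta>))"
      using nn_integral_rayleigh_tail[OF assms(1), of v] by (cases "v \<ge> 0") auto
  qed
  also have "\<dots> \<le> (\<integral>\<^sup>+v. C * ennreal (exp (C * v) * exp (- v\<^sup>2 / (2 * \<eta>))) \<partial>lborel)"
    using assms(2) by (intro nn_integral_mono) (simp add: ennreal_mult indicator_def mult.assoc)
  also have "\<dots> = C * sqrt (2 * pi * \<eta>) * exp (\<eta> * C\<^sup>2 / 2)"
    using nn_integral_exp_times_gaussian[OF assms(1), of C] assms(2)
    by (simp add: nn_integral_cmult ennreal_mult' mult.assoc)
  finally show ?thesis
    using assms by (subst ennreal_plus) auto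
qed

lemma gaussian_le_nn_integral_rayleigh:
  assumes "\<eta> > 0"
  shows "ennreal (exp (- x\<^sup>2 / (2 * \<eta>)))
       \<le> (\<integral>\<^sup>+u. ennreal (rayleigh_density \<eta> u) * indicator {max 0 x..} u \<partial>lborel)"
proof -
  have "(max 0 x)\<^sup>2 \<le> x\<^sup>2"
    by (auto simp: max_def power2_eq_square)
  then have "exp (- x\<^sup>2 / (2 * \<eta>)) \<le> exp (- (max 0 x)\<^sup>2 / (2 * \<eta>))"
    using assms by (auto intro: divide_right_mono)
  then show ?thesis
    using assms by (simp add: nn_integral_rayleigh_tail)
qed

lemma nn_integral_gaussian_penalty_le:
  fixes d :: "'b \<Rightarrow> real" and Z :: ennreal
  assumes "sigma_finite_measure M" and [measurable]: "d \<in> borel_measurable M"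
    and "\<eta> > 0" "C \<ge> 0"
    and sublevel: "\<And>r. emeasure M {q \<in> space M. d q \<le> r} \<le> exp (C * r) * Z"
  shows "(\<integral>\<^sup>+q. exp (- (d q - \<tau>)\<^sup>2 / (2 * \<eta>)) \<partial>M)
       \<le> Z * (exp (\<tau> * C) * (C * sqrt (2 * pi * \<eta>) * exp (\<eta> * C\<^sup>2 / 2) + 1))"
proof -
  interpret M: sigma_finite_measure M by fact
  interpret pair_sigma_finite M lborel ..
  let ?k = "\<lambda>u. ennreal (rayleigh_density \<eta> u) * indicator {0..} u"
  let ?G = "\<lambda>q u. ?k u * indicator {q \<in> space M. d q \<le> \<tau> + u} q"
  have "(\<integral>\<^sup>+q. exp (- (d q - \<tau>)\<^sup>2 / (2 * \<eta>)) \<partial>M) \<le> (\<integral>\<^sup>+q. \<integral>\<^sup>+u. ?G q u \<partial>lborel \<partial>M)"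
  proof (rule nn_integral_mono)
    fix q assume "q \<in> space M"
    then have "?G q u = ennreal (rayleigh_density \<eta> u) * indicator {max 0 (d q - \<tau>)..} u" for u
      by (auto split: split_indicator)
    then show "ennreal (exp (- (d q - \<tau>)\<^sup>2 / (2 * \<eta>))) \<le> (\<integral>\<^sup>+u. ?G q u \<partial>lborel)"
      using gaussian_le_nn_integral_rayleigh[OF \<open>\<eta> > 0\<close>] by simp
  qed
  also have "\<dots> = (\<integral>\<^sup>+u. \<integral>\<^sup>+q. ?G q u \<partial>M \<partial>lborel)"
    by (rule Fubini'[of ?G, symmetric]) measurable
  also have "\<dots> = (\<integral>\<^sup>+u. ?k u * emeasure M {q \<in> space M. d q \<le> \<tau> + u} \<partial>lborel)"
    by (intro nn_integral_cong) (simp add: nn_integral_cmult)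
  also have "\<dots> \<le> (\<integral>\<^sup>+u. (Z * exp (C * \<tau>)) * (ennreal (rayleigh_density \<eta> u * exp (C * u)) * indicator {0..} u) \<partial>lborel)"
  proof (rule nn_integral_mono)
    fix u :: real
    have "?k u * emeasure M {q \<in> space M. d q \<le> \<tau> + u} \<le> ?k u * (exp (C * (\<tau> + u)) * Z)"
      by (intro mult_left_mono sublevel) simp
    also have "\<dots> = (Z * exp (C * \<tau>)) * (ennreal (rayleigh_density \<eta> u * exp (C * u)) * indicator {0..} u)"
      using rayleigh_density_nonneg[OF \<open>\<eta> > 0\<close>, of u]
      by (cases "u \<ge> 0") (simp_all add: ennreal_mult distrib_left exp_add mult_ac)
    finally show "?k u * emeasure M {q \<in> space M. d q \<le> \<tau> + u} \<le> \<dots>" .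
  qed
  also have "\<dots> = (Z * exp (C * \<tau>)) * (\<integral>\<^sup>+u. ennreal (rayleigh_density \<eta> u * exp (C * u)) * indicator {0..} u \<partial>lborel)"
    by (rule nn_integral_cmult) measurable
  also have "\<dots> \<le> (Z * exp (C * \<tau>)) * (1 + C * sqrt (2 * pi * \<eta>) * exp (\<eta> * C\<^sup>2 / 2))"
    using nn_integral_rayleigh_exp_le[OF \<open>\<eta> > 0\<close> \<open>C \<ge> 0\<close>] by (rule mult_left_mono) simp
  finally show ?thesis
    using \<open>C \<ge> 0\<close> \<open>\<eta> > 0\<close> by (simp add: ennreal_mult mult.assoc mult.commute add.commute)
qed

lemma lipschitz_on_add_linear:
  fixes f :: "'a::metric_space \<Rightarrow> real"
  assumes "L-lipschitz_on UNIV f"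
  shows "(sqrt (L\<^sup>2 + \<alpha>\<^sup>2 + \<beta>\<^sup>2))-lipschitz_on UNIV (\<lambda>(x, s, t). f x + \<alpha> * s + \<beta> * t)"
proof (rule lipschitz_onI)
  fix q p :: "'a \<times> real \<times> real"
  obtain x s t x' s' t' where qp: "q = (x, s, t)" "p = (x', s', t')"
    by (cases q, cases p) auto
  have "\<bar>f x - f x'\<bar> \<le> L * dist x x'"
    using lipschitz_onD[OF assms] by (simp add: dist_real_def)
  then have "dist (f x + \<alpha> * s + \<beta> * t) (f x' + \<alpha> * s' + \<beta> * t')
      \<le> inner (L, \<bar>\<alpha>\<bar>, \<bar>\<beta>\<bar>) (dist x x', \<bar>s - s'\<bar>, \<bar>t - t'\<bar>)"
    by (simp add: dist_real_def abs_mult[symmetric] algebra_simps)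
  also have "\<dots> \<le> norm (L, \<bar>\<alpha>\<bar>, \<bar>\<beta>\<bar>) * norm (dist x x', \<bar>s - s'\<bar>, \<bar>t - t'\<bar>)"
    by (rule norm_cauchy_schwarz)
  also have "\<dots> = sqrt (L\<^sup>2 + \<alpha>\<^sup>2 + \<beta>\<^sup>2) * dist (x, s, t) (x', s', t')"
    by (simp add: norm_Pair dist_Pair_Pair dist_real_def add.assoc)
  finally show "dist ((\<lambda>(x, s, t). f x + \<alpha> * s + \<beta> * t) q) ((\<lambda>(x, s, t). f x + \<alpha> * s + \<beta> * t) p)
      \<le> sqrt (L\<^sup>2 + \<alpha>\<^sup>2 + \<beta>\<^sup>2) * dist q p"
    unfolding qp by simp
qed simp

lemma lipschitz_on_le_mult_infdist:
  fixes g :: "'a::metric_space \<Rightarrow> real"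
  assumes "L-lipschitz_on UNIV g" "S \<noteq> {}" "\<And>p. p \<in> S \<Longrightarrow> g p \<le> 0"
  shows "g q \<le> L * infdist q S"
proof -
  have g_le: "g q \<le> L * dist q p" if "p \<in> S" for p
    using lipschitz_onD[OF assms(1), of q p] assms(3)[OF that] by (simp add: dist_real_def)
  show ?thesis
  proof (cases "L = 0")
    case True
    with g_le \<open>S \<noteq> {}\<close> show ?thesis by auto
  next
    case False
    with lipschitz_on_nonneg[OF assms(1)] have "L > 0" by simp
    have "g q / L \<le> infdist q S"
      unfolding infdist_notempty[OF \<open>S \<noteq> {}\<close>]
      using g_le \<open>L > 0\<close> \<open>S \<noteq> {}\<close> by (intro cINF_greatest) (auto simp: pos_divide_le_eq mult.commute)
    with \<open>L > 0\<close> show ?thesis by (simp add: pos_divide_le_eq mult.commute)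
  qed
qed

definition lifted_set :: "('a \<Rightarrow> real) \<Rightarrow> ('a \<Rightarrow> real) \<Rightarrow> real \<Rightarrow> real \<Rightarrow> ('a \<times> real \<times> real) set" where
  "lifted_set f h a b = {(x, s, t). h x \<le> a * s \<and> f x + a * s \<le> b * t}"

lemma lifted_set_nonempty:
  assumes "a > 0" "b > 0"
  shows "lifted_set f h a b \<noteq> {}"
proof -
  have "(x, h x / a, (f x + h x) / b) \<in> lifted_set f h a b" for x
    using assms by (simp add: lifted_set_def)
  then show ?thesis by blast
qed

lemma closed_lifted_set:
  assumes "continuous_on UNIV f" "continuous_on UNIV h"
  shows "closed (lifted_set f h a b)"
proof -
  have "lifted_set f h a b
      = {q. h (fst q) \<le> a * fst (snd q)} \<inter> {q. f (fst q) + a * fst (snd q) \<le> b * snd (snd q)}"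
    by (auto simp: lifted_set_def)
  then show ?thesis
    by (auto intro!: closed_Int closed_Collect_le continuous_intros
        continuous_on_compose2[OF assms(1)] continuous_on_compose2[OF assms(2)])
qed

lemma add_shift_mem_lifted_set:
  fixes f h :: "'a::real_normed_vector \<Rightarrow> real"
  assumes "Lf-lipschitz_on UNIV f" "Lh-lipschitz_on UNIV h" "a > 0" "b > 0"
    and "infdist q (lifted_set f h a b) \<le> r"
  defines "c1 \<equiv> sqrt (a\<^sup>2 + Lh\<^sup>2)" and "c2 \<equiv> sqrt (b\<^sup>2 + a\<^sup>2 + Lf\<^sup>2)"
  shows "q + (0, c1 * r / a, (c2 + c1) * r / b) \<in> lifted_set f h a b"
proof -
  let ?Q = "lifted_set f h a b"
  have Qne: "?Q \<noteq> {}"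
    using assms(3,4) by (rule lifted_set_nonempty)
  obtain x s t where q: "q = (x, s, t)"
    by (cases q) auto
  have "(\<lambda>(x, s, t). h x + (- a) * s + 0 * t) q \<le> c1 * infdist q ?Q"
  proof (rule lipschitz_on_le_mult_infdist)
    show "c1-lipschitz_on UNIV (\<lambda>(x, s, t). h x + - a * s + 0 * t)"
      using lipschitz_on_add_linear[OF assms(2), of "- a" 0] by (simp add: c1_def add.commute)
  qed (fact Qne, auto simp: lifted_set_def)
  moreover have "(\<lambda>(x, s, t). f x + a * s + (- b) * t) q \<le> c2 * infdist q ?Q"
  proof (rule lipschitz_on_le_mult_infdist)
    show "c2-lipschitz_on UNIV (\<lambda>(x, s, t). f x + a * s + - b * t)"
      using lipschitz_on_add_linear[OF assms(1), of a "- b"] by (simp add: c2_def add_ac)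
  qed (fact Qne, auto simp: lifted_set_def)
  moreover have "c1 * infdist q ?Q \<le> c1 * r" "c2 * infdist q ?Q \<le> c2 * r"
    using assms(5) by (auto simp: c1_def c2_def intro: mult_left_mono)
  moreover have "a * (c1 * r / a) = c1 * r" "b * ((c2 + c1) * r / b) = (c2 + c1) * r"
    using assms(3,4) by simp_all
  ultimately show ?thesis
    by (simp add: q lifted_set_def algebra_simps)
qed

lemma emeasure_exp_density_translate:
  fixes \<phi> :: "'a::euclidean_space \<Rightarrow> real"
  assumes "linear \<phi>" "S \<in> sets borel"
  defines "W \<equiv> density lborel (\<lambda>q. exp (- \<phi> q))"
  shows "emeasure W {q. q + v \<in> S} = exp (\<phi> v) * emeasure W S"
proof -
  interpret linear \<phi> by fact
  have [measurable]: "\<phi> \<in> borel_measurable borel"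
    using \<open>linear \<phi>\<close> by (intro borel_measurable_continuous_onI linear_continuous_on linear_conv_bounded_linear[THEN iffD1])
  have [measurable]: "{q. q + v \<in> S} \<in> sets borel"
    using assms(2) by measurable
  define F where "F q = ennreal (exp (\<phi> v) * exp (- \<phi> q)) * indicator S q" for q
  have "emeasure W {q. q + v \<in> S} = (\<integral>\<^sup>+q. F (v + q) \<partial>lborel)"
    unfolding W_def F_def
    by (auto simp: emeasure_density add diff mult_exp_exp add.commute intro!: nn_integral_cong split: split_indicator)
  also have "\<dots> = (\<integral>\<^sup>+q. F q \<partial>distr lborel borel ((+) v))"
    using assms(2) by (intro nn_integral_distr[symmetric]) (simp_all add: F_def)
  also have "\<dots> = exp (\<phi> v) * emeasure W S"
    unfolding lborel_distr_plus W_def F_def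
    using assms(2) by (simp add: emeasure_density ennreal_mult nn_integral_cmult mult.assoc)
  finally show ?thesis .
qed

lemma emeasure_infdist_lifted_set_le:
  fixes f h :: "'a::euclidean_space \<Rightarrow> real"
  assumes "Lf-lipschitz_on UNIV f" "Lh-lipschitz_on UNIV h" "a > 0" "b > 0"
  defines "W \<equiv> density lborel (\<lambda>q. exp (- b * snd (snd q)))"
    and "C \<equiv> sqrt (b\<^sup>2 + a\<^sup>2 + Lf\<^sup>2) + sqrt (a\<^sup>2 + Lh\<^sup>2)"
  shows "emeasure W {q. infdist q (lifted_set f h a b) \<le> r} \<le> exp (C * r) * emeasure W (lifted_set f h a b)"
proof -
  let ?Q = "lifted_set f h a b" and ?v = "(0, sqrt (a\<^sup>2 + Lh\<^sup>2) * r / a, C * r / b)"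
  have Q_borel [measurable]: "?Q \<in> sets borel"
    using assms(1,2) by (intro borel_closed closed_lifted_set lipschitz_on_continuous_on)
  have "{q. infdist q ?Q \<le> r} \<subseteq> {q. q + ?v \<in> ?Q}"
    using add_shift_mem_lifted_set[OF assms(1-4)] by (auto simp: C_def add.commute)
  then have "emeasure W {q. infdist q ?Q \<le> r} \<le> emeasure W {q. q + ?v \<in> ?Q}"
    by (rule emeasure_mono) (simp add: W_def)
  also have "\<dots> = exp (C * r) * emeasure W ?Q"
    using emeasure_exp_density_translate[OF _ Q_borel, of "\<lambda>q. b * snd (snd q)" ?v] assms(4)
    by (simp add: W_def linear_iff algebra_simps)
  finally show ?thesis .
qed

theorem lemma26:
  fixes f h :: "'a::euclidean_space \<Rightarrow> real"
    and Lf Lh a b \<eta> \<tau> :: real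
  assumes "Lf-lipschitz_on UNIV f" and "Lh-lipschitz_on UNIV h"
    and "a > 0" and "b > 0" and "\<eta> > 0" and "\<tau> \<ge> 0"
  defines "Q \<equiv> {(x :: 'a, s, t). h x \<le> a * s \<and> f x + a * s \<le> b * t}"
    and "C \<equiv> sqrt (b\<^sup>2 + a\<^sup>2 + Lf\<^sup>2) + sqrt (a\<^sup>2 + Lh\<^sup>2)"
  shows "(\<integral>\<^sup>+ q. ennreal (exp (- b * snd (snd q)) * exp (- ((infdist q Q - \<tau>)\<^sup>2) / (2 * \<eta>))) \<partial>lborel)
    \<le> (\<integral>\<^sup>+ p. ennreal (exp (- b * snd (snd p))) * indicator Q p \<partial>lborel)
       * ennreal (exp (\<tau> * C) * (C * sqrt (2 * pi * \<eta>) * exp (\<eta> * C\<^sup>2 / 2) + 1))"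
proof -
  define W where "W = density lborel (\<lambda>q::'a \<times> real \<times> real. exp (- b * snd (snd q)))"
  have Q_lifted: "Q = lifted_set f h a b"
    unfolding Q_def lifted_set_def ..
  have Q_borel [measurable]: "Q \<in> sets borel"
    unfolding Q_lifted using assms(1,2) by (intro borel_closed closed_lifted_set lipschitz_on_continuous_on)
  have [measurable]: "(\<lambda>q. infdist q Q) \<in> borel_measurable borel"
    "(\<lambda>q::'a \<times> real \<times> real. snd (snd q)) \<in> borel_measurable borel"
    by (intro borel_measurable_continuous_onI continuous_intros)+
  have "(\<integral>\<^sup>+ q. ennreal (exp (- b * snd (snd q)) * exp (- ((infdist q Q - \<tau>)\<^sup>2) / (2 * \<eta>))) \<partial>lborel)
      = (\<integral>\<^sup>+ q. exp (- (infdist q Q - \<tau>)\<^sup>2 / (2 * \<eta>)) \<partial>W)"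
    unfolding W_def by (subst nn_integral_density) (auto simp: ennreal_mult')
  also have "\<dots> \<le> emeasure W Q * ennreal (exp (\<tau> * C) * (C * sqrt (2 * pi * \<eta>) * exp (\<eta> * C\<^sup>2 / 2) + 1))"
  proof (rule nn_integral_gaussian_penalty_le)
    show "sigma_finite_measure W"
      unfolding W_def by (subst sigma_finite_measure.sigma_finite_iff_density_finite[OF sigma_finite_lborel]) auto
    show "emeasure W {q \<in> space W. infdist q Q \<le> r} \<le> exp (C * r) * emeasure W Q" for r
      using emeasure_infdist_lifted_set_le[OF assms(1-4), of r] by (simp add: W_def C_def Q_lifted)
  qed (simp_all add: W_def C_def \<open>\<eta> > 0\<close> add_nonneg_nonneg)
  also have "emeasure W Q = (\<integral>\<^sup>+ p. ennreal (exp (- b * snd (snd p))) * indicator Q p \<partial>lborel)"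
    by (simp add: W_def emeasure_density)
  finally show ?thesis .
qed

end
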